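(* For every positive integer $l$ and every $n\ge 1$, the polynomial $\mathcal{A}_n^{(l)}(s,t)$ is symmetric in $s$ and $t$; equivalently, $\mathcal{A}^{(l)}(n,k)=\mathcal{A}^{(l)}(n,n-1-k)$ for $0\le k\le n-1$, i.e. the polynomial $\mathcal{A}_n^{(l)}(t)=\sum_{k=0}^{n-1}\mathcal{A}^{(l)}(n,k)t^k$ is palindromic.
   Context: A subexceedant function on $[n]$ is a map $f:[n]\to[n]$ with $1\le f(i)\le i$; its block leader set is $\mathrm{bl}(f)=\{i\in[n]: f(i)\notin f(\{1,\dots,i-1\})\}$. $\mathcal{A}^{(l)}(n,k)$ is the number of $l$-tuples $(f_1,\dots,f_l)$ of subexceedant functions on $[n]$ with $|\mathrm{bl}(f_1)|=k+1$ and $\mathrm{bl}(f_1)=\cdots=\mathrm{bl}(f_l)$. $\mathcal{A}_n^{(l)}(s,t)=\sum_{k=0}^{n-1}\mathcal{A}^{(l)}(n,k)s^kt^{n-1-k}$. *)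

theory Defs
  imports Main "HOL-Library.FuncSet"
begin

definition subexc :: "nat \<Rightarrow> (nat \<Rightarrow> nat) set" where
  "subexc n = {f \<in> {1..n} \<rightarrow>\<^sub>E {1..n}. \<forall>i\<in>{1..n}. 1 \<le> f i \<and> f i \<le> i}"

definition bl :: "nat \<Rightarrow> (nat \<Rightarrow> nat) \<Rightarrow> nat set" where
  "bl n f = {i \<in> {1..n}. f i \<notin> f ` {1..<i}}"

definition A :: "nat \<Rightarrow> nat \<Rightarrow> nat \<Rightarrow> nat" where
  "A l n k = card {fs. length fs = l \<and> set fs \<subseteq> subexc n \<and>
      card (bl n (fs ! 0)) = k + 1 \<and> (\<forall>j<l. bl n (fs ! j) = bl n (fs ! 0))}"

definition Apoly :: "nat \<Rightarrow> nat \<Rightarrow> 'a::comm_semiring_1 \<Rightarrow> 'a \<Rightarrow> 'a" where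
  "Apoly l n s t = (\<Sum>k=0..n-1. of_nat (A l n k) * s ^ k * t ^ (n - 1 - k))"

end

theory Submission
  imports Defs
begin

text \<open>Write \<open>F\<^sub>n(S)\<close> for the subexceedant functions on \<open>[n]\<close> with block leader set \<open>S\<close>.
  Extending \<open>g \<in> F\<^sub>n(S - {n+1})\<close> by a value \<open>v \<le> n+1\<close> makes \<open>n+1\<close> a block leader exactly
  when \<open>v\<close> is new, and \<open>g\<close> takes \<open>|S - {n+1}|\<close> distinct values; hence \<open>|F\<^sub>n\<^sub>+\<^sub>1(S)|\<close> is
  \<open>|F\<^sub>n(S - {n+1})|\<close> times \<open>n + 1 - |S - {n+1}|\<close> or \<open>|S - {n+1}|\<close>, according as \<open>n+1 \<in> S\<close> or not.
  The involution \<open>S \<mapsto> {1} \<union> ([2..n] - S)\<close> on leader sets swaps these two factors at every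
  step, so it preserves \<open>|F\<^sub>n(S)|\<close> while sending \<open>|S| = k+1\<close> to \<open>|S| = n-k\<close>. Since
  \<open>A l n k\<close> is the sum of \<open>|F\<^sub>n(S)|\<^sup>l\<close> over the leader sets \<open>S \<ni> 1\<close> of size \<open>k+1\<close>,
  it follows that \<open>A l n k = A l n (n-1-k)\<close>.\<close>

definition subexc_bl :: "nat \<Rightarrow> nat set \<Rightarrow> (nat \<Rightarrow> nat) set" where
  "subexc_bl n S = {f \<in> subexc n. bl n f = S}"

definition leader_sets :: "nat \<Rightarrow> nat \<Rightarrow> nat set set" where
  "leader_sets n k = {S. S \<subseteq> {1..n} \<and> 1 \<in> S \<and> card S = k + 1}"

definition bl_dual :: "nat \<Rightarrow> nat set \<Rightarrow> nat set" where
  "bl_dual n S = insert 1 ({2..n} - S)"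

subsection \<open>Block leaders\<close>

lemma bl_subset: "bl n f \<subseteq> {1..n}"
  by (auto simp: bl_def)

lemma one_in_bl: "n \<ge> 1 \<Longrightarrow> 1 \<in> bl n f"
  by (simp add: bl_def)

lemma image_bl: "f ` bl n f = f ` {1..n}"
proof
  show "f ` bl n f \<subseteq> f ` {1..n}"
    using bl_subset by blast
  show "f ` {1..n} \<subseteq> f ` bl n f"
  proof
    fix y assume "y \<in> f ` {1..n}"
    then obtain i where i: "i \<in> {1..n}" "f i = y" by auto
    let ?P = "\<lambda>j. 1 \<le> j \<and> f j = y"
    define j where "j = (LEAST j. ?P j)"
    have j: "?P j" "j \<le> i"
      using LeastI[of ?P i] Least_le[of ?P i] i by (simp_all add: j_def)
    have "f j \<notin> f ` {1..<j}"
    proof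
      assume "f j \<in> f ` {1..<j}"
      then obtain j' where "j' \<in> {1..<j}" "?P j'"
        using j by auto
      with not_less_Least[of j' ?P] show False
        by (simp add: j_def)
    qed
    with i j have "j \<in> bl n f"
      by (simp add: bl_def)
    with j show "y \<in> f ` bl n f" by blast
  qed
qed

lemma bl_values_distinct:
  assumes "i \<in> bl n f" "j \<in> bl n f" "i < j"
  shows "f i \<noteq> f j"
proof
  assume "f i = f j"
  moreover have "i \<in> {1..<j}"
    using assms by (auto simp: bl_def)
  ultimately have "f j \<in> f ` {1..<j}"
    by (metis image_eqI)
  with assms(2) show False
    by (simp add: bl_def)
qed

lemma inj_on_bl: "inj_on f (bl n f)"
proof (rule inj_onI)
  fix i j assume "i \<in> bl n f" "j \<in> bl n f" "f i = f j"
  then show "i = j"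
    using bl_values_distinct[of i n f j] bl_values_distinct[of j n f i] by (metis linorder_neqE_nat)
qed

lemma card_image_eq_card_bl: "card (f ` {1..n}) = card (bl n f)"
  by (metis image_bl inj_on_bl card_image)

lemma bl_fun_upd_Suc:
  "bl (Suc n) (g(Suc n := v)) = bl n g \<union> (if v \<notin> g ` {1..n} then {Suc n} else {})"
proof -
  have "\<And>i. i \<le> n \<Longrightarrow> (g(Suc n := v)) ` {1..<i} = g ` {1..<i}"
    by (auto simp: fun_upd_image)
  moreover have "(g(Suc n := v)) ` {1..<Suc n} = g ` {1..n}"
    by (auto simp: fun_upd_image atLeastLessThanSuc_atLeastAtMost)
  ultimately show ?thesis
    unfolding bl_def by (auto simp: le_Suc_eq)
qed

lemma finite_subexc: "finite (subexc n)"
  unfolding subexc_def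
  by (rule finite_subset[of _ "{1..n} \<rightarrow>\<^sub>E {1..n}"]) (auto intro: finite_PiE)

lemma finite_subexc_bl: "finite (subexc_bl n S)"
  unfolding subexc_bl_def using finite_subexc by auto

lemma subexc_fun_upd_Suc:
  "g \<in> subexc n \<Longrightarrow> v \<in> {1..Suc n} \<Longrightarrow> g(Suc n := v) \<in> subexc (Suc n)"
  unfolding subexc_def
  by (auto simp: PiE_def extensional_def Pi_iff) (metis atLeastAtMost_iff le_Suc_eq le_SucI)

lemma subexc_restrict_Suc: "f \<in> subexc (Suc n) \<Longrightarrow> f(Suc n := undefined) \<in> subexc n"
  unfolding subexc_def
  by (auto simp: PiE_def extensional_def Pi_iff) (metis atLeastAtMost_iff le_SucI order_trans)

lemma subexc_Suc_value: "f \<in> subexc (Suc n) \<Longrightarrow> f (Suc n) \<in> {1..Suc n}"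
  unfolding subexc_def by auto

lemma subexc_undefined_Suc: "g \<in> subexc n \<Longrightarrow> g (Suc n) = undefined"
  unfolding subexc_def by (auto simp: PiE_def extensional_def)

lemma subexc_image_subset: "g \<in> subexc n \<Longrightarrow> g ` {1..n} \<subseteq> {1..Suc n}"
  unfolding subexc_def by auto

subsection \<open>The recursion for \<open>|F\<^sub>n(S)|\<close>\<close>

lemma subexc_bl_Suc_eq_image:
  assumes "S \<subseteq> {1..Suc n}"
  shows "subexc_bl (Suc n) S = (\<lambda>(g, v). g(Suc n := v)) `
    (SIGMA g:subexc_bl n (S - {Suc n}). {v \<in> {1..Suc n}. Suc n \<in> S \<longleftrightarrow> v \<notin> g ` {1..n}})"
    (is "_ = ?h ` ?\<Sigma>")
proof
  show "subexc_bl (Suc n) S \<subseteq> ?h ` ?\<Sigma>"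
  proof
    fix f assume f: "f \<in> subexc_bl (Suc n) S"
    define g where "g = f(Suc n := undefined)"
    have fs: "f \<in> subexc (Suc n)" and fS: "bl (Suc n) f = S"
      using f by (auto simp: subexc_bl_def)
    have fg: "f = g(Suc n := f (Suc n))"
      by (simp add: g_def)
    have blf: "S = bl n g \<union> (if f (Suc n) \<notin> g ` {1..n} then {Suc n} else {})"
      using bl_fun_upd_Suc[of n g "f (Suc n)"] fg fS by simp
    have "Suc n \<notin> bl n g"
      using bl_subset[of n g] by auto
    with blf have "g \<in> subexc_bl n (S - {Suc n})"
      and "Suc n \<in> S \<longleftrightarrow> f (Suc n) \<notin> g ` {1..n}"
      using subexc_restrict_Suc[OF fs] by (auto simp: g_def subexc_bl_def)
    with subexc_Suc_value[OF fs] have "(g, f (Suc n)) \<in> ?\<Sigma>"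
      by simp
    with fg show "f \<in> ?h ` ?\<Sigma>"
      by (metis (no_types, lifting) case_prod_conv image_eqI)
  qed
  show "?h ` ?\<Sigma> \<subseteq> subexc_bl (Suc n) S"
  proof
    fix f assume "f \<in> ?h ` ?\<Sigma>"
    then obtain g v where g: "g \<in> subexc n" "bl n g = S - {Suc n}"
      and v: "v \<in> {1..Suc n}" "Suc n \<in> S \<longleftrightarrow> v \<notin> g ` {1..n}" and f: "f = g(Suc n := v)"
      by (auto simp: subexc_bl_def)
    then show "f \<in> subexc_bl (Suc n) S"
      using subexc_fun_upd_Suc[OF g(1) v(1)] bl_fun_upd_Suc[of n g v]
      by (auto simp: subexc_bl_def split: if_splits)
  qed
qed

lemma inj_on_fun_upd_Sigma:
  assumes "\<And>g. g \<in> G \<Longrightarrow> g a = c"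
  shows "inj_on (\<lambda>(g, v). g(a := v)) (SIGMA g:G. V g)"
proof (rule inj_onI, clarify)
  fix g v g' v' assume g: "g \<in> G" "g' \<in> G" and eq: "g(a := v) = g'(a := v')"
  then have "v = v'"
    by (metis fun_upd_same)
  moreover have "g = g'"
    using assms[OF g(1)] assms[OF g(2)] eq by (metis fun_upd_triv fun_upd_upd)
  ultimately show "g = g' \<and> v = v'" by simp
qed

lemma card_new_values:
  assumes "g \<in> subexc_bl n S0"
  shows "card {v \<in> {1..Suc n}. P \<longleftrightarrow> v \<notin> g ` {1..n}} = (if P then Suc n - card S0 else card S0)"
proof -
  have img: "g ` {1..n} \<subseteq> {1..Suc n}" "card (g ` {1..n}) = card S0"
    using assms subexc_image_subset card_image_eq_card_bl by (auto simp: subexc_bl_def)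
  show ?thesis
  proof (cases P)
    case True
    then have "{v \<in> {1..Suc n}. P \<longleftrightarrow> v \<notin> g ` {1..n}} = {1..Suc n} - g ` {1..n}"
      by auto
    with True img show ?thesis
      by (simp add: card_Diff_subset)
  next
    case False
    then have "{v \<in> {1..Suc n}. P \<longleftrightarrow> v \<notin> g ` {1..n}} = g ` {1..n}"
      using img by auto
    with False img show ?thesis by simp
  qed
qed

lemma card_subexc_bl_Suc:
  assumes "S \<subseteq> {1..Suc n}"
  shows "card (subexc_bl (Suc n) S) = card (subexc_bl n (S - {Suc n})) *
    (if Suc n \<in> S then Suc n - card (S - {Suc n}) else card (S - {Suc n}))"
proof -
  have inj: "inj_on (\<lambda>(g, v). g(Suc n := v))
      (SIGMA g:subexc_bl n (S - {Suc n}). {v \<in> {1..Suc n}. Suc n \<in> S \<longleftrightarrow> v \<notin> g ` {1..n}})"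
    by (rule inj_on_fun_upd_Sigma) (auto simp: subexc_bl_def subexc_undefined_Suc)
  show ?thesis
    unfolding subexc_bl_Suc_eq_image[OF assms] card_image[OF inj]
    using finite_subexc_bl card_new_values by simp
qed

subsection \<open>The complementation of leader sets\<close>

lemma bl_dual_subset: "n \<ge> 1 \<Longrightarrow> bl_dual n S \<subseteq> {1..n}"
  by (auto simp: bl_dual_def)

lemma one_in_bl_dual: "1 \<in> bl_dual n S"
  by (simp add: bl_dual_def)

lemma bl_dual_bl_dual: "S \<subseteq> {1..n} \<Longrightarrow> 1 \<in> S \<Longrightarrow> bl_dual n (bl_dual n S) = S"
  unfolding bl_dual_def by (auto simp: subset_iff)

lemma card_bl_dual:
  assumes S: "S \<subseteq> {1..n}" and one: "1 \<in> S"
  shows "card (bl_dual n S) = Suc n - card S"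
proof -
  have sub: "S - {1} \<subseteq> {2..n}"
    using S by (auto simp: subset_iff)
  have "card ({2..n} - S) = card ({2..n} - (S - {1}))"
    by (rule arg_cong[where f = card]) auto
  also have "\<dots> = card {2..n} - card (S - {1})"
    using sub finite_subset[OF S] by (intro card_Diff_subset) auto
  also have "\<dots> = (n - 1) - (card S - 1)"
    using one by simp
  finally have "card (bl_dual n S) = Suc ((n - 1) - (card S - 1))"
    unfolding bl_dual_def by simp
  moreover have "1 \<le> card S" "card S \<le> n"
    using one S card_mono[OF _ S] finite_subset[OF S] by (auto simp: Suc_le_eq card_gt_0_iff)
  ultimately show ?thesis by simp
qed

lemma bl_dual_leader_sets:
  assumes "S \<in> leader_sets n k" "k \<le> n - 1" "n \<ge> 1"
  shows "bl_dual n S \<in> leader_sets n (n - 1 - k)"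
proof -
  have "card (bl_dual n S) = n - 1 - k + 1"
    using assms card_bl_dual[of S n] by (auto simp: leader_sets_def)
  then show ?thesis
    using bl_dual_subset[OF assms(3)] one_in_bl_dual by (simp add: leader_sets_def)
qed

lemma card_subexc_bl_dual:
  assumes "n \<ge> 1" "S \<subseteq> {1..n}" "1 \<in> S"
  shows "card (subexc_bl n (bl_dual n S)) = card (subexc_bl n S)"
  using assms
proof (induction n arbitrary: S rule: nat_induct_at_least)
  case base
  then have "S = {1}" by auto
  then show ?case by (simp add: bl_dual_def)
next
  case (Suc n)
  define S0 where "S0 = S - {Suc n}"
  define D where "D = bl_dual (Suc n) S"
  have S0: "S0 \<subseteq> {1..n}" "1 \<in> S0"
    using Suc by (auto simp: S0_def le_Suc_eq)
  have D: "D \<subseteq> {1..Suc n}" "D - {Suc n} = bl_dual n S0" "Suc n \<in> D \<longleftrightarrow> Suc n \<notin> S"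
    using Suc.hyps by (auto simp: D_def S0_def bl_dual_def)
  have "card S0 \<le> n"
    using card_mono[OF _ S0(1)] by simp
  moreover have "card (subexc_bl (Suc n) S) =
      card (subexc_bl n S0) * (if Suc n \<in> S then Suc n - card S0 else card S0)"
    using card_subexc_bl_Suc[OF Suc.prems(1)] by (simp add: S0_def)
  moreover have "card (subexc_bl (Suc n) D) = card (subexc_bl n (bl_dual n S0)) *
      (if Suc n \<in> D then Suc n - card (bl_dual n S0) else card (bl_dual n S0))"
    using card_subexc_bl_Suc[OF D(1)] D(2) by simp
  ultimately show ?case
    using D(3) card_bl_dual[OF S0] Suc.IH[OF S0] by (simp add: D_def)
qed

subsection \<open>Symmetry of \<open>A\<close>\<close>

lemma A_tuples_eq_UN:
  assumes "l \<ge> 1" "n \<ge> 1"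
  shows "{fs. length fs = l \<and> set fs \<subseteq> subexc n \<and>
      card (bl n (fs ! 0)) = k + 1 \<and> (\<forall>j<l. bl n (fs ! j) = bl n (fs ! 0))}
    = (\<Union>S\<in>leader_sets n k. {fs. set fs \<subseteq> subexc_bl n S \<and> length fs = l})"
proof (intro set_eqI iffI)
  fix fs assume "fs \<in> {fs. length fs = l \<and> set fs \<subseteq> subexc n \<and>
      card (bl n (fs ! 0)) = k + 1 \<and> (\<forall>j<l. bl n (fs ! j) = bl n (fs ! 0))}"
  then have fs: "length fs = l" "set fs \<subseteq> subexc n" "card (bl n (fs ! 0)) = k + 1"
    "\<forall>j<l. bl n (fs ! j) = bl n (fs ! 0)"
    by blast+
  have "set fs \<subseteq> subexc_bl n (bl n (fs ! 0))"
  proof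
    fix f assume "f \<in> set fs"
    then obtain j where "j < l" "f = fs ! j"
      using fs(1) by (auto simp: in_set_conv_nth)
    with fs(4) have "bl n f = bl n (fs ! 0)"
      by blast
    with \<open>f \<in> set fs\<close> fs(2) show "f \<in> subexc_bl n (bl n (fs ! 0))"
      by (auto simp: subexc_bl_def)
  qed
  moreover have "bl n (fs ! 0) \<in> leader_sets n k"
    using fs(3) bl_subset one_in_bl[OF assms(2)] by (simp add: leader_sets_def)
  ultimately show "fs \<in> (\<Union>S\<in>leader_sets n k. {fs. set fs \<subseteq> subexc_bl n S \<and> length fs = l})"
    using fs(1) by blast
next
  fix fs assume "fs \<in> (\<Union>S\<in>leader_sets n k. {fs. set fs \<subseteq> subexc_bl n S \<and> length fs = l})"
  then obtain S where S: "S \<in> leader_sets n k" "set fs \<subseteq> subexc_bl n S" "length fs = l"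
    by blast
  have bl_fs: "bl n (fs ! j) = S" if "j < l" for j
  proof -
    have "fs ! j \<in> subexc_bl n S"
      using that S(2,3) nth_mem[of j fs] by blast
    then show ?thesis
      by (simp add: subexc_bl_def)
  qed
  have "set fs \<subseteq> subexc n"
    using S(2) by (auto simp: subexc_bl_def)
  moreover have "card (bl n (fs ! 0)) = k + 1"
    using bl_fs[of 0] assms(1) S(1) by (simp add: leader_sets_def)
  ultimately show "fs \<in> {fs. length fs = l \<and> set fs \<subseteq> subexc n \<and>
      card (bl n (fs ! 0)) = k + 1 \<and> (\<forall>j<l. bl n (fs ! j) = bl n (fs ! 0))}"
    using S(3) bl_fs assms(1) by simp
qed

lemma A_eq_sum_leader_sets:
  assumes "l \<ge> 1" "n \<ge> 1"
  shows "A l n k = (\<Sum>S\<in>leader_sets n k. card (subexc_bl n S) ^ l)"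
proof -
  let ?T = "\<lambda>S. {fs. set fs \<subseteq> subexc_bl n S \<and> length fs = l}"
  have fin: "finite (leader_sets n k)"
    by (rule finite_subset[of _ "Pow {1..n}"]) (auto simp: leader_sets_def)
  have disj: "?T S \<inter> ?T S' = {}" if "S \<noteq> S'" for S S'
  proof (rule ccontr)
    assume "?T S \<inter> ?T S' \<noteq> {}"
    then obtain fs where "set fs \<subseteq> subexc_bl n S" "set fs \<subseteq> subexc_bl n S'" "length fs = l"
      by blast
    moreover have "fs ! 0 \<in> set fs"
      using \<open>length fs = l\<close> assms(1) by simp
    ultimately have "fs ! 0 \<in> subexc_bl n S" "fs ! 0 \<in> subexc_bl n S'"
      by blast+
    with that show False
      by (simp add: subexc_bl_def)
  qed
  have "A l n k = card (\<Union>S\<in>leader_sets n k. ?T S)"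
    unfolding A_def A_tuples_eq_UN[OF assms] ..
  also have "\<dots> = (\<Sum>S\<in>leader_sets n k. card (?T S))"
    using fin disj finite_lists_length_eq[OF finite_subexc_bl] by (intro card_UN_disjoint) auto
  also have "\<dots> = (\<Sum>S\<in>leader_sets n k. card (subexc_bl n S) ^ l)"
    by (simp add: card_lists_length_eq[OF finite_subexc_bl])
  finally show ?thesis .
qed

lemma A_symmetric:
  assumes "l \<ge> 1" "n \<ge> 1" "k \<le> n - 1"
  shows "A l n k = A l n (n - 1 - k)"
proof -
  have "bij_betw (bl_dual n) (leader_sets n k) (leader_sets n (n - 1 - k))"
  proof (rule bij_betw_byWitness[where f' = "bl_dual n"])
    show "bl_dual n ` leader_sets n k \<subseteq> leader_sets n (n - 1 - k)"
      using assms bl_dual_leader_sets by blast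
    show "bl_dual n ` leader_sets n (n - 1 - k) \<subseteq> leader_sets n k"
      using assms bl_dual_leader_sets[of _ n "n - 1 - k"] by auto
  qed (auto simp: leader_sets_def bl_dual_bl_dual)
  then have "(\<Sum>S\<in>leader_sets n (n - 1 - k). card (subexc_bl n S) ^ l) =
      (\<Sum>S\<in>leader_sets n k. card (subexc_bl n (bl_dual n S)) ^ l)"
    by (rule sum.reindex_bij_betw[symmetric])
  also have "\<dots> = (\<Sum>S\<in>leader_sets n k. card (subexc_bl n S) ^ l)"
    using assms(2) by (intro sum.cong) (auto simp: leader_sets_def card_subexc_bl_dual)
  finally show ?thesis
    unfolding A_eq_sum_leader_sets[OF assms(1,2)] ..
qed

lemma palindromic_sum_symmetric:
  fixes s t :: "'a::comm_semiring_1"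
  assumes "\<And>k. k \<le> m \<Longrightarrow> c k = c (m - k)"
  shows "(\<Sum>k=0..m. c k * s ^ k * t ^ (m - k)) = (\<Sum>k=0..m. c k * t ^ k * s ^ (m - k))"
proof -
  have "(\<Sum>k=0..m. c k * t ^ k * s ^ (m - k)) = (\<Sum>k=0..m. c (m - k) * t ^ (m - k) * s ^ (m - (m - k)))"
    by (subst sum.atLeastAtMost_rev) simp
  also have "\<dots> = (\<Sum>k=0..m. c k * s ^ k * t ^ (m - k))"
  proof (rule sum.cong)
    fix k assume "k \<in> {0..m}"
    then have "m - (m - k) = k" "c (m - k) = c k"
      using assms[of k] by simp_all
    then show "c (m - k) * t ^ (m - k) * s ^ (m - (m - k)) = c k * s ^ k * t ^ (m - k)"
      by (simp add: ac_simps)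
  qed simp
  finally show ?thesis ..
qed

theorem mainTheorem14:
  fixes l n :: nat
  assumes "l \<ge> 1" and "n \<ge> 1"
  shows "(\<forall>s t :: 'a::comm_semiring_1. Apoly l n s t = Apoly l n t s)
       \<and> (\<forall>k\<le>n-1. A l n k = A l n (n - 1 - k))"
proof
  show "\<forall>k\<le>n-1. A l n k = A l n (n - 1 - k)"
    using A_symmetric[OF assms] by blast
  show "\<forall>s t :: 'a. Apoly l n s t = Apoly l n t s"
    unfolding Apoly_def
  proof (intro allI palindromic_sum_symmetric)
    fix k assume "k \<le> n - 1"
    then show "of_nat (A l n k) = (of_nat (A l n (n - 1 - k)) :: 'a)"
      using A_symmetric[OF assms, of k] by simp
  qed
qed

end
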